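(* There is a pseudo-double functor $\mathbb{O}\mathbf{rg}\to\mathbb{E}\mathbf{ff}^{\mathrm{el}}$ which is the identity on objects and vertical morphisms and is fully faithful on the category of horizontal morphisms and squares, with essential image the linear elementary effects handlers (those whose carrier is of the form $S\mathcal{y}$ for a set $S$). On horizontal morphisms it is given, for each set $S$, by the natural bijection between $[q,p]$-coalgebra structures $S\to[q,p]\triangleleft S$ and polynomial maps $S\mathcal{y}\triangleleft q\to p\triangleleft S\mathcal{y}$.
   Context: Polynomials $p=\sum_{I\in p(1)}\mathcal{y}^{p[I]}$ form $\mathbf{Poly}$ (morphisms are natural transformations: $\phi_1\colon p(1)\to q(1)$ and $\phi^\#_I\colon q[\phi_1I]\to p[I]$), with composition $\triangleleft$ and Dirichlet tensor $\otimes$ ($(p\otimes q)(1)=p(1)\times q(1)$, $(p\otimes q)[I,J]=p[I]\times q[J]$, unit $\mathcal{y}$). A set $S$ is identified with the constant polynomial, and $S\mathcal{y}$ is the linear polynomial with positions $S$ and one direction each. The closure of $\otimes$ is $[q,p]\coloneqq\sum_{\phi\colon q\to p}\mathcal{y}^{\sum_{I\in q(1)}p[\phi_1I]}$, with $(-\otimes q)\dashv[q,-]$; a $[q,p]$-coalgebra is a set $S$ with a function $\vartheta\colon S\to[q,p]\triangleleft S$. The double category $\mathbb{O}\mathbf{rg}$ has objects polynomials, vertical morphisms polynomial maps, horizontal morphisms from $q$ to $p$ the $[q,p]$-coalgebras (composed by taking the product of state sets and using the canonical maps $([q,p]\triangleleft T)\otimes([r,q]\triangleleft S)\to([q,p]\otimes[r,q])\triangleleft(T\times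 S)\to[r,p]\triangleleft(T\times S)$), and squares from $(S,\vartheta)$ (from $q$ to $p$) to $(S',\vartheta')$ (from $q'$ to $p'$) over $\psi\colon q\to q'$, $\varphi\colon p\to p'$ the functions $f\colon S\to S'$ with $([q,p']\triangleleft f)\circ([q,\varphi]\triangleleft S)\circ\vartheta=([\psi,p']\triangleleft S')\circ\vartheta'\circ f$. Elementary effects handlers: for polynomials $p,q$, a $(p,q)$-effects handler is a polynomial $s$ with a morphism $\varphi\colon s\triangleleft q\to p\triangleleft s$; it is linear if $s=S\mathcal{y}$. $\mathbb{E}\mathbf{ff}^{\mathrm{el}}$ is the pseudo-double category with objects polynomials, vertical morphisms polynomial maps, horizontal morphisms from $q$ to $p$ the $(p,q)$-effects handlers, composite of $(s,\varphi)$ (a $(p,q)$-handler) and $(t,\psi)$ (a $(q,r)$-handler) given by $s\triangleleft t$ with structure map $(\varphi\triangleleft t)\circ(s\triangleleft\psi)$, and squares over $\psi\colon q\to q'$, $\varphi\colon p\to p'$ the maps $\gamma\colon s\to s'$ with $(\varphi\triangleleft\gamma)\circ\vartheta=\vartheta'\circ(\gamma\triangleleft\psi)$. *)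

theory Defs
  imports "HOL-Library.FuncSet"
begin

section \<open>Polynomials, morphisms, composition\<close>

text \<open>Positions and directions live in HOL types; all functions are
extensional (undefined outside their domain) so that HOL equality is equality
of morphisms.\<close>

type_synonym ('i, 'd) poly = "'i set \<times> ('i \<Rightarrow> 'd set)"

definition pos :: "('i, 'd) poly \<Rightarrow> 'i set" where "pos p = fst p"
definition dir :: "('i, 'd) poly \<Rightarrow> 'i \<Rightarrow> 'd set" where "dir p I = snd p I"

text \<open>A morphism p -> q: on positions phi1 : p(1) -> q(1), on directions
phi# I : q[phi1 I] -> p[I].\<close>

type_synonym ('i, 'd, 'j, 'e) pmor = "('i \<Rightarrow> 'j) \<times> ('i \<Rightarrow> 'e \<Rightarrow> 'd)"

definition is_pmor :: "('i, 'd) poly \<Rightarrow> ('j, 'e) poly \<Rightarrow> ('i, 'd, 'j, 'e) pmor \<Rightarrow> bool" where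
  "is_pmor p q \<phi> \<longleftrightarrow>
     fst \<phi> \<in> pos p \<rightarrow>\<^sub>E pos q \<and>
     (\<forall>I\<in>pos p. snd \<phi> I \<in> dir q (fst \<phi> I) \<rightarrow>\<^sub>E dir p I) \<and>
     (\<forall>I. I \<notin> pos p \<longrightarrow> snd \<phi> I = undefined)"

definition pid :: "('i, 'd) poly \<Rightarrow> ('i, 'd, 'i, 'd) pmor" where
  "pid p = (\<lambda>I\<in>pos p. I, \<lambda>I\<in>pos p. \<lambda>d\<in>dir p I. d)"

text \<open>mcomp p r psi phi is the composite psi o phi : p -> r.\<close>
definition mcomp :: "('i, 'd) poly \<Rightarrow> ('k, 'f) poly \<Rightarrow> ('j, 'e, 'k, 'f) pmor
    \<Rightarrow> ('i, 'd, 'j, 'e) pmor \<Rightarrow> ('i, 'd, 'k, 'f) pmor" where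
  "mcomp p r \<psi> \<phi> =
     (\<lambda>I\<in>pos p. fst \<psi> (fst \<phi> I),
      \<lambda>I\<in>pos p. \<lambda>x\<in>dir r (fst \<psi> (fst \<phi> I)). snd \<phi> I (snd \<psi> (fst \<phi> I) x))"

definition is_iso :: "('i, 'd) poly \<Rightarrow> ('j, 'e) poly \<Rightarrow> ('i, 'd, 'j, 'e) pmor \<Rightarrow> bool" where
  "is_iso p q \<gamma> \<longleftrightarrow> is_pmor p q \<gamma> \<and>
     (\<exists>\<delta>. is_pmor q p \<delta> \<and> mcomp p p \<delta> \<gamma> = pid p \<and> mcomp q q \<gamma> \<delta> = pid q)"

definition tri :: "('i, 'd) poly \<Rightarrow> ('j, 'e) poly \<Rightarrow> ('i \<times> ('d \<Rightarrow> 'j), 'd \<times> 'e) poly" where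
  "tri p q = ({(I, f). I \<in> pos p \<and> f \<in> dir p I \<rightarrow>\<^sub>E pos q},
              \<lambda>(I, f). Sigma (dir p I) (\<lambda>d. dir q (f d)))"

definition tri_mor :: "('i, 'd) poly \<Rightarrow> ('j, 'e) poly \<Rightarrow> ('i', 'd') poly \<Rightarrow> ('j', 'e') poly
    \<Rightarrow> ('i, 'd, 'i', 'd') pmor \<Rightarrow> ('j, 'e, 'j', 'e') pmor
    \<Rightarrow> ('i \<times> ('d \<Rightarrow> 'j), 'd \<times> 'e, 'i' \<times> ('d' \<Rightarrow> 'j'), 'd' \<times> 'e') pmor" where
  "tri_mor p q p' q' \<phi> \<psi> =
    (\<lambda>(I, f)\<in>pos (tri p q).
        (fst \<phi> I, \<lambda>d'\<in>dir p' (fst \<phi> I). fst \<psi> (f (snd \<phi> I d'))),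
     \<lambda>(I, f)\<in>pos (tri p q).
        \<lambda>(d', e')\<in>Sigma (dir p' (fst \<phi> I)) (\<lambda>d'. dir q' (fst \<psi> (f (snd \<phi> I d')))).
          (snd \<phi> I d', snd \<psi> (f (snd \<phi> I d')) e'))"

definition assoc_fwd :: "('i, 'd) poly \<Rightarrow> ('j, 'e) poly \<Rightarrow> ('k, 'f) poly
    \<Rightarrow> (('i \<times> ('d \<Rightarrow> 'j)) \<times> ('d \<times> 'e \<Rightarrow> 'k), ('d \<times> 'e) \<times> 'f,
        'i \<times> ('d \<Rightarrow> 'j \<times> ('e \<Rightarrow> 'k)), 'd \<times> ('e \<times> 'f)) pmor" where
  "assoc_fwd p q r =
    (\<lambda>((I, f), g)\<in>pos (tri (tri p q) r).
        (I, \<lambda>d\<in>dir p I. (f d, \<lambda>e\<in>dir q (f d). g (d, e))),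
     \<lambda>((I, f), g)\<in>pos (tri (tri p q) r).
        \<lambda>(d, (e, x))\<in>Sigma (dir p I) (\<lambda>d. Sigma (dir q (f d)) (\<lambda>e. dir r (g (d, e)))).
          ((d, e), x))"

definition assoc_bwd :: "('i, 'd) poly \<Rightarrow> ('j, 'e) poly \<Rightarrow> ('k, 'f) poly
    \<Rightarrow> ('i \<times> ('d \<Rightarrow> 'j \<times> ('e \<Rightarrow> 'k)), 'd \<times> ('e \<times> 'f),
        ('i \<times> ('d \<Rightarrow> 'j)) \<times> ('d \<times> 'e \<Rightarrow> 'k), ('d \<times> 'e) \<times> 'f) pmor" where
  "assoc_bwd p q r =
    (\<lambda>(I, h)\<in>pos (tri p (tri q r)).
        ((I, \<lambda>d\<in>dir p I. fst (h d)),
         \<lambda>(d, e)\<in>Sigma (dir p I) (\<lambda>d. dir q (fst (h d))). snd (h d) e),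
     \<lambda>(I, h)\<in>pos (tri p (tri q r)).
        \<lambda>((d, e), x)\<in>Sigma (Sigma (dir p I) (\<lambda>d. dir q (fst (h d)))) (\<lambda>(d, e). dir r (snd (h d) e)).
          (d, (e, x)))"

definition cpoly :: "'s set \<Rightarrow> ('s, unit) poly" where
  "cpoly S = (S, \<lambda>_. {})"

text \<open>The linear polynomial S y; the polynomial y is lin {()}.\<close>
definition lin :: "'s set \<Rightarrow> ('s, unit) poly" where
  "lin S = (S, \<lambda>_. {()})"

definition linmap :: "'s set \<Rightarrow> ('s \<Rightarrow> 't) \<Rightarrow> ('s, unit, 't, unit) pmor" where
  "linmap S f = (\<lambda>x\<in>S. f x, \<lambda>x\<in>S. \<lambda>u\<in>{()}. ())"

definition cmor :: "'s set \<Rightarrow> ('s \<Rightarrow> 't) \<Rightarrow> ('s, unit, 't, unit) pmor" where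
  "cmor S f = (\<lambda>x\<in>S. f x, \<lambda>x\<in>S. \<lambda>u\<in>({}::unit set). undefined)"

definition ihom :: "('j, 'e) poly \<Rightarrow> ('i, 'd) poly
    \<Rightarrow> (('j \<Rightarrow> 'i) \<times> ('j \<Rightarrow> 'd \<Rightarrow> 'e), 'j \<times> 'd) poly" where
  "ihom q p = ({\<chi>. is_pmor q p \<chi>}, \<lambda>\<chi>. Sigma (pos q) (\<lambda>J. dir p (fst \<chi> J)))"

definition ihom_post :: "('j, 'e) poly \<Rightarrow> ('i, 'd) poly \<Rightarrow> ('i', 'd') poly
    \<Rightarrow> ('i, 'd, 'i', 'd') pmor
    \<Rightarrow> (('j \<Rightarrow> 'i) \<times> ('j \<Rightarrow> 'd \<Rightarrow> 'e), 'j \<times> 'd,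
        ('j \<Rightarrow> 'i') \<times> ('j \<Rightarrow> 'd' \<Rightarrow> 'e), 'j \<times> 'd') pmor" where
  "ihom_post q p p' \<phi> =
    (\<lambda>\<chi>\<in>pos (ihom q p). mcomp q p' \<phi> \<chi>,
     \<lambda>\<chi>\<in>pos (ihom q p). \<lambda>(J, d')\<in>dir (ihom q p') (mcomp q p' \<phi> \<chi>).
        (J, snd \<phi> (fst \<chi> J) d'))"

definition ihom_pre :: "('j, 'e) poly \<Rightarrow> ('j', 'e') poly \<Rightarrow> ('i, 'd) poly
    \<Rightarrow> ('j, 'e, 'j', 'e') pmor
    \<Rightarrow> (('j' \<Rightarrow> 'i) \<times> ('j' \<Rightarrow> 'd \<Rightarrow> 'e'), 'j' \<times> 'd,
        ('j \<Rightarrow> 'i) \<times> ('j \<Rightarrow> 'd \<Rightarrow> 'e), 'j \<times> 'd) pmor" where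
  "ihom_pre q q' p \<psi> =
    (\<lambda>\<chi>\<in>pos (ihom q' p). mcomp q p \<chi> \<psi>,
     \<lambda>\<chi>\<in>pos (ihom q' p). \<lambda>(J, d)\<in>dir (ihom q p) (mcomp q p \<chi> \<psi>). (fst \<psi> J, d))"

section \<open>The double category Org\<close>

text \<open>A horizontal morphism from q to p: a [q,p]-coalgebra structure on S,
  theta : S -> [q,p] \<triangleleft> S.\<close>
definition is_coalg :: "('i, 'd) poly \<Rightarrow> ('j, 'e) poly \<Rightarrow> 's set
    \<Rightarrow> ('s \<Rightarrow> (('j \<Rightarrow> 'i) \<times> ('j \<Rightarrow> 'd \<Rightarrow> 'e)) \<times> ('j \<times> 'd \<Rightarrow> 's)) \<Rightarrow> bool" where
  "is_coalg p q S \<theta> \<longleftrightarrow> \<theta> \<in> S \<rightarrow>\<^sub>E pos (tri (ihom q p) (cpoly S))"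

definition org_comp :: "('i, 'd) poly \<Rightarrow> ('j, 'e) poly \<Rightarrow> ('k, 'f) poly
    \<Rightarrow> 't set \<Rightarrow> ('t \<Rightarrow> (('j \<Rightarrow> 'i) \<times> ('j \<Rightarrow> 'd \<Rightarrow> 'e)) \<times> ('j \<times> 'd \<Rightarrow> 't))
    \<Rightarrow> 's set \<Rightarrow> ('s \<Rightarrow> (('k \<Rightarrow> 'j) \<times> ('k \<Rightarrow> 'e \<Rightarrow> 'f)) \<times> ('k \<times> 'e \<Rightarrow> 's))
    \<Rightarrow> ('t \<times> 's \<Rightarrow> (('k \<Rightarrow> 'i) \<times> ('k \<Rightarrow> 'd \<Rightarrow> 'f)) \<times> ('k \<times> 'd \<Rightarrow> 't \<times> 's))" where
  "org_comp p q r T \<theta> S \<eta> =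
    (\<lambda>(t, s)\<in>T \<times> S.
       (mcomp r p (fst (\<theta> t)) (fst (\<eta> s)),
        \<lambda>(K, d)\<in>dir (ihom r p) (mcomp r p (fst (\<theta> t)) (fst (\<eta> s))).
          (snd (\<theta> t) (fst (fst (\<eta> s)) K, d),
           snd (\<eta> s) (K, snd (fst (\<theta> t)) (fst (fst (\<eta> s)) K) d))))"

definition org_id :: "('i, 'd) poly \<Rightarrow> (unit \<Rightarrow> (('i \<Rightarrow> 'i) \<times> ('i \<Rightarrow> 'd \<Rightarrow> 'd)) \<times> ('i \<times> 'd \<Rightarrow> unit))" where
  "org_id p = (\<lambda>u\<in>{()}. (pid p, \<lambda>x\<in>dir (ihom p p) (pid p). ()))"

text \<open>Squares in Org from (S, theta) (q to p) to (S', theta') (q' to p')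
  over psi : q -> q' and phi : p -> p':
  ([q,p'] \<triangleleft> f) o ([q,phi] \<triangleleft> S) o theta = ([psi,p'] \<triangleleft> S') o theta' o f.\<close>
definition org_sq :: "('i, 'd) poly \<Rightarrow> ('j, 'e) poly \<Rightarrow> 's set
    \<Rightarrow> ('s \<Rightarrow> (('j \<Rightarrow> 'i) \<times> ('j \<Rightarrow> 'd \<Rightarrow> 'e)) \<times> ('j \<times> 'd \<Rightarrow> 's))
    \<Rightarrow> ('i', 'd') poly \<Rightarrow> ('j', 'e') poly \<Rightarrow> 's' set
    \<Rightarrow> ('s' \<Rightarrow> (('j' \<Rightarrow> 'i') \<times> ('j' \<Rightarrow> 'd' \<Rightarrow> 'e')) \<times> ('j' \<times> 'd' \<Rightarrow> 's'))
    \<Rightarrow> ('j, 'e, 'j', 'e') pmor \<Rightarrow> ('i, 'd, 'i', 'd') pmor \<Rightarrow> ('s \<Rightarrow> 's') \<Rightarrow> bool" where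
  "org_sq p q S \<theta> p' q' S' \<theta>' \<psi> \<phi> f \<longleftrightarrow>
     f \<in> S \<rightarrow>\<^sub>E S' \<and>
     (\<forall>x\<in>S.
        fst (tri_mor (ihom q p') (cpoly S) (ihom q p') (cpoly S') (pid (ihom q p')) (cmor S f))
          (fst (tri_mor (ihom q p) (cpoly S) (ihom q p') (cpoly S) (ihom_post q p p' \<phi>) (pid (cpoly S)))
             (\<theta> x))
        =
        fst (tri_mor (ihom q' p') (cpoly S') (ihom q p') (cpoly S') (ihom_pre q q' p' \<psi>) (pid (cpoly S')))
          (\<theta>' (f x)))"

section \<open>The pseudo-double category Eff^el\<close>

text \<open>A (p,q)-effects handler (horizontal from q to p): s with s \<triangleleft> q -> p \<triangleleft> s.\<close>
definition is_handler :: "('i, 'd) poly \<Rightarrow> ('j, 'e) poly \<Rightarrow> ('k, 'f) poly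
    \<Rightarrow> ('k \<times> ('f \<Rightarrow> 'j), 'f \<times> 'e, 'i \<times> ('d \<Rightarrow> 'k), 'd \<times> 'f) pmor \<Rightarrow> bool" where
  "is_handler p q s \<eta> \<longleftrightarrow> is_pmor (tri s q) (tri p s) \<eta>"

text \<open>Composite of (s, phi) (a (p,q)-handler) and (t, psi) (a (q,r)-handler):
  carrier s \<triangleleft> t, structure (phi \<triangleleft> t) o (s \<triangleleft> psi), with the associators made explicit.\<close>
definition eff_comp :: "('i, 'd) poly \<Rightarrow> ('j, 'e) poly \<Rightarrow> ('k, 'f) poly
    \<Rightarrow> ('a, 'b) poly \<Rightarrow> ('a \<times> ('b \<Rightarrow> 'j), 'b \<times> 'e, 'i \<times> ('d \<Rightarrow> 'a), 'd \<times> 'b) pmor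
    \<Rightarrow> ('c, 'g) poly \<Rightarrow> ('c \<times> ('g \<Rightarrow> 'k), 'g \<times> 'f, 'j \<times> ('e \<Rightarrow> 'c), 'e \<times> 'g) pmor
    \<Rightarrow> (('a \<times> ('b \<Rightarrow> 'c)) \<times> ('b \<times> 'g \<Rightarrow> 'k), ('b \<times> 'g) \<times> 'f,
        'i \<times> ('d \<Rightarrow> 'a \<times> ('b \<Rightarrow> 'c)), 'd \<times> ('b \<times> 'g)) pmor" where
  "eff_comp p q r s \<phi> t \<psi> =
    (let A = tri (tri s t) r in
     mcomp A (tri p (tri s t)) (assoc_fwd p s t)
      (mcomp A (tri (tri p s) t) (tri_mor (tri s q) t (tri p s) t \<phi> (pid t))
       (mcomp A (tri (tri s q) t) (assoc_bwd s q t)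
        (mcomp A (tri s (tri q t)) (tri_mor s (tri t r) s (tri q t) (pid s) \<psi>)
          (assoc_fwd s t r)))))"

definition eff_id :: "('i, 'd) poly \<Rightarrow> (unit \<times> (unit \<Rightarrow> 'i), unit \<times> 'd, 'i \<times> ('d \<Rightarrow> unit), 'd \<times> unit) pmor" where
  "eff_id p =
    (\<lambda>(u, f)\<in>pos (tri (lin {()}) p). (f (), \<lambda>d\<in>dir p (f ()). ()),
     \<lambda>(u, f)\<in>pos (tri (lin {()}) p). \<lambda>(d, v)\<in>dir p (f ()) \<times> {()}. ((), d))"

definition eff_sq :: "('i, 'd) poly \<Rightarrow> ('j, 'e) poly \<Rightarrow> ('k, 'f) poly
    \<Rightarrow> ('k \<times> ('f \<Rightarrow> 'j), 'f \<times> 'e, 'i \<times> ('d \<Rightarrow> 'k), 'd \<times> 'f) pmor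
    \<Rightarrow> ('i', 'd') poly \<Rightarrow> ('j', 'e') poly \<Rightarrow> ('k', 'f') poly
    \<Rightarrow> ('k' \<times> ('f' \<Rightarrow> 'j'), 'f' \<times> 'e', 'i' \<times> ('d' \<Rightarrow> 'k'), 'd' \<times> 'f') pmor
    \<Rightarrow> ('j, 'e, 'j', 'e') pmor \<Rightarrow> ('i, 'd, 'i', 'd') pmor \<Rightarrow> ('k, 'f, 'k', 'f') pmor \<Rightarrow> bool" where
  "eff_sq p q s \<theta> p' q' s' \<theta>' \<psi> \<phi> \<gamma> \<longleftrightarrow>
     is_pmor s s' \<gamma> \<and>
     mcomp (tri s q) (tri p' s') (tri_mor p s p' s' \<phi> \<gamma>) \<theta>
       = mcomp (tri s q) (tri p' s') \<theta>' (tri_mor s q s' q' \<gamma> \<psi>)"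

definition lunit :: "('i, 'd) poly \<Rightarrow> (unit \<times> (unit \<Rightarrow> 'i), unit \<times> 'd, 'i, 'd) pmor" where
  "lunit a = (\<lambda>(u, f)\<in>pos (tri (lin {()}) a). f (),
              \<lambda>(u, f)\<in>pos (tri (lin {()}) a). \<lambda>e\<in>dir a (f ()). ((), e))"

definition runit :: "('i, 'd) poly \<Rightarrow> ('i \<times> ('d \<Rightarrow> unit), 'd \<times> unit, 'i, 'd) pmor" where
  "runit a = (\<lambda>(I, f)\<in>pos (tri a (lin {()})). I,
              \<lambda>(I, f)\<in>pos (tri a (lin {()})). \<lambda>d\<in>dir a I. (d, ()))"

section \<open>The functor Org -> Eff^el\<close>

text \<open>The natural bijection: a coalgebra structure theta : S -> [q,p] \<triangleleft> S gives
  the map S y \<triangleleft> q -> p \<triangleleft> S y sending (x, J) to (phi1 J, d |-> k (J, d)) where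
  theta x = (phi, k), with backward map on directions d |-> phi# J d.\<close>
definition Phi :: "('i, 'd) poly \<Rightarrow> ('j, 'e) poly \<Rightarrow> 's set
    \<Rightarrow> ('s \<Rightarrow> (('j \<Rightarrow> 'i) \<times> ('j \<Rightarrow> 'd \<Rightarrow> 'e)) \<times> ('j \<times> 'd \<Rightarrow> 's))
    \<Rightarrow> ('s \<times> (unit \<Rightarrow> 'j), unit \<times> 'e, 'i \<times> ('d \<Rightarrow> 's), 'd \<times> unit) pmor" where
  "Phi p q S \<theta> =
    (\<lambda>(x, f)\<in>pos (tri (lin S) q).
        (fst (fst (\<theta> x)) (f ()), \<lambda>d\<in>dir p (fst (fst (\<theta> x)) (f ())). snd (\<theta> x) (f (), d)),
     \<lambda>(x, f)\<in>pos (tri (lin S) q).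
        \<lambda>(d, u)\<in>dir p (fst (fst (\<theta> x)) (f ())) \<times> {()}. ((), snd (fst (\<theta> x)) (f ()) d))"

definition comp_iso :: "'t set \<Rightarrow> 's set \<Rightarrow> ('t \<times> (unit \<Rightarrow> 's), unit \<times> unit, 't \<times> 's, unit) pmor" where
  "comp_iso T S = (\<lambda>(t, g)\<in>pos (tri (lin T) (lin S)). (t, g ()),
                   \<lambda>(t, g)\<in>pos (tri (lin T) (lin S)). \<lambda>u\<in>{()}. ((), ()))"

end

theory Submission
  imports Defs
begin

text \<open>A polynomial map \<open>S y \<triangleleft> q \<rightarrow> p \<triangleleft> S y\<close> assigns to a state \<open>x\<close> and a \<open>q\<close>-position \<open>J\<close> a
  \<open>p\<close>-position, a next state for each of its directions, and a \<open>q\<close>-direction at \<open>J\<close> for each of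
  them; grouped by \<open>x\<close>, these are exactly a polynomial map \<open>q \<rightarrow> p\<close> together with an update of
  the state along its directions, i.e. a point of \<open>[q, p] \<triangleleft> S\<close>. Since all directions of a
  linear polynomial are trivial, the square conditions on both sides reduce to the same
  pointwise equations, and the compositor and its coherences are identities between
  reassociations of tuples. A handler whose carrier is isomorphic to some \<open>S y\<close> is
  transported along the isomorphism to a linear one, which comes from a coalgebra.\<close>

section \<open>Polynomials and their morphisms\<close>

lemma pos_tri [simp]: "pos (tri p q) = {(I, f). I \<in> pos p \<and> f \<in> dir p I \<rightarrow>\<^sub>E pos q}"
  by (simp add: tri_def pos_def)

lemma dir_tri [simp]: "dir (tri p q) (I, f) = Sigma (dir p I) (\<lambda>d. dir q (f d))"
  by (simp add: tri_def dir_def)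

lemma pos_lin [simp]: "pos (lin S) = S"
  by (simp add: lin_def pos_def)

lemma dir_lin [simp]: "dir (lin S) x = {()}"
  by (simp add: lin_def dir_def)

lemma pos_cpoly [simp]: "pos (cpoly S) = S"
  by (simp add: cpoly_def pos_def)

lemma dir_cpoly [simp]: "dir (cpoly S) x = {}"
  by (simp add: cpoly_def dir_def)

lemma pos_ihom [simp]: "pos (ihom q p) = {\<chi>. is_pmor q p \<chi>}"
  by (simp add: ihom_def pos_def)

lemma dir_ihom [simp]: "dir (ihom q p) \<chi> = Sigma (pos q) (\<lambda>J. dir p (fst \<chi> J))"
  by (simp add: ihom_def dir_def)

lemma unit_fun_eq [simp]: "(\<lambda>u::unit. f ()) = f"
  by auto

lemma PiE_unit_iff [simp]: "(f :: unit \<Rightarrow> _) \<in> {()} \<rightarrow>\<^sub>E A \<longleftrightarrow> f () \<in> A"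
  by (auto simp: PiE_iff extensional_def)

lemma PiE_unit_unit_iff [simp]:
  "(f :: unit \<times> unit \<Rightarrow> _) \<in> {((), ())} \<rightarrow>\<^sub>E A \<longleftrightarrow> f ((), ()) \<in> A"
  by (auto simp: PiE_iff extensional_def)

lemma pmor_pos: "is_pmor p q \<phi> \<Longrightarrow> I \<in> pos p \<Longrightarrow> fst \<phi> I \<in> pos q"
  by (auto simp: is_pmor_def)

lemma pmor_dir: "is_pmor p q \<phi> \<Longrightarrow> I \<in> pos p \<Longrightarrow> d \<in> dir q (fst \<phi> I) \<Longrightarrow> snd \<phi> I d \<in> dir p I"
  by (auto simp: is_pmor_def)

lemma pmor_fst_undefined: "is_pmor p q \<phi> \<Longrightarrow> I \<notin> pos p \<Longrightarrow> fst \<phi> I = undefined"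
  by (auto simp: is_pmor_def PiE_def extensional_def)

lemma pmor_snd_undefined: "is_pmor p q \<phi> \<Longrightarrow> I \<notin> pos p \<Longrightarrow> snd \<phi> I = undefined"
  by (auto simp: is_pmor_def)

lemma pmor_snd_undefined_dir:
  "is_pmor p q \<phi> \<Longrightarrow> I \<in> pos p \<Longrightarrow> d \<notin> dir q (fst \<phi> I) \<Longrightarrow> snd \<phi> I d = undefined"
  by (auto simp: is_pmor_def PiE_def extensional_def)

lemma is_pmorI:
  assumes "\<And>I. I \<in> pos p \<Longrightarrow> fst \<phi> I \<in> pos q"
    and "\<And>I d. I \<in> pos p \<Longrightarrow> d \<in> dir q (fst \<phi> I) \<Longrightarrow> snd \<phi> I d \<in> dir p I"
    and "\<And>I. I \<notin> pos p \<Longrightarrow> fst \<phi> I = undefined"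
    and "\<And>I. I \<notin> pos p \<Longrightarrow> snd \<phi> I = undefined"
    and "\<And>I d. I \<in> pos p \<Longrightarrow> d \<notin> dir q (fst \<phi> I) \<Longrightarrow> snd \<phi> I d = undefined"
  shows "is_pmor p q \<phi>"
  using assms by (auto simp: is_pmor_def PiE_def extensional_def)

lemma pmor_eqI:
  assumes "is_pmor p q \<phi>" "is_pmor p q \<phi>'"
    and "\<And>I. I \<in> pos p \<Longrightarrow> fst \<phi> I = fst \<phi>' I"
    and "\<And>I d. I \<in> pos p \<Longrightarrow> d \<in> dir q (fst \<phi> I) \<Longrightarrow> snd \<phi> I d = snd \<phi>' I d"
  shows "\<phi> = \<phi>'"
proof (rule prod_eqI)
  show "fst \<phi> = fst \<phi>'"
    by (rule ext) (metis assms(1,2,3) pmor_fst_undefined)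
  show "snd \<phi> = snd \<phi>'"
    by (intro ext) (metis assms pmor_snd_undefined pmor_snd_undefined_dir)
qed

lemma pmor_eq_iff:
  assumes "is_pmor p q \<phi>" "is_pmor p q \<phi>'"
  shows "\<phi> = \<phi>' \<longleftrightarrow>
    (\<forall>I\<in>pos p. fst \<phi> I = fst \<phi>' I \<and> (\<forall>d\<in>dir q (fst \<phi> I). snd \<phi> I d = snd \<phi>' I d))"
  using pmor_eqI[OF assms] by auto

lemma mcomp_pmor: "is_pmor p q \<phi> \<Longrightarrow> is_pmor q r \<psi> \<Longrightarrow> is_pmor p r (mcomp p r \<psi> \<phi>)"
  by (rule is_pmorI) (auto simp: mcomp_def pmor_pos pmor_dir)

lemma mcomp_fst [simp]: "I \<in> pos p \<Longrightarrow> fst (mcomp p r \<psi> \<phi>) I = fst \<psi> (fst \<phi> I)"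
  by (simp add: mcomp_def)

lemma mcomp_snd [simp]:
  "I \<in> pos p \<Longrightarrow> d \<in> dir r (fst \<psi> (fst \<phi> I)) \<Longrightarrow>
    snd (mcomp p r \<psi> \<phi>) I d = snd \<phi> I (snd \<psi> (fst \<phi> I) d)"
  by (simp add: mcomp_def)

lemma pid_pmor: "is_pmor p p (pid p)"
  by (rule is_pmorI) (auto simp: pid_def)

lemma pid_fst [simp]: "I \<in> pos p \<Longrightarrow> fst (pid p) I = I"
  by (simp add: pid_def)

lemma pid_snd [simp]: "I \<in> pos p \<Longrightarrow> d \<in> dir p I \<Longrightarrow> snd (pid p) I d = d"
  by (simp add: pid_def)

lemma mcomp_assoc:
  assumes "is_pmor p q \<phi>" "is_pmor q r \<psi>" "is_pmor r s \<chi>"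
  shows "mcomp p s \<chi> (mcomp p r \<psi> \<phi>) = mcomp p s (mcomp q s \<chi> \<psi>) \<phi>"
  by (rule pmor_eqI)
    (auto intro: mcomp_pmor assms simp: pmor_pos[OF assms(1)] pmor_pos[OF assms(2)]
      pmor_dir[OF assms(2)] pmor_dir[OF assms(3)])

lemma mcomp_pid_left: "is_pmor p q \<phi> \<Longrightarrow> mcomp p q (pid q) \<phi> = \<phi>"
  by (rule pmor_eqI) (auto intro: mcomp_pmor pid_pmor simp: pmor_pos)

lemma mcomp_pid_right: "is_pmor p q \<phi> \<Longrightarrow> mcomp p q \<phi> (pid p) = \<phi>"
  by (rule pmor_eqI) (auto intro: mcomp_pmor pid_pmor simp: pmor_pos pmor_dir)

lemma tri_mor_pmor:
  "is_pmor p p' \<phi> \<Longrightarrow> is_pmor q q' \<psi> \<Longrightarrow> is_pmor (tri p q) (tri p' q') (tri_mor p q p' q' \<phi> \<psi>)"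
  by (rule is_pmorI) (auto simp: tri_mor_def pmor_pos pmor_dir PiE_iff extensional_def)

lemma tri_mor_fst [simp]:
  "I \<in> pos p \<Longrightarrow> f \<in> dir p I \<rightarrow>\<^sub>E pos q \<Longrightarrow>
    fst (tri_mor p q p' q' \<phi> \<psi>) (I, f) = (fst \<phi> I, \<lambda>d'\<in>dir p' (fst \<phi> I). fst \<psi> (f (snd \<phi> I d')))"
  by (simp add: tri_mor_def)

lemma tri_mor_snd [simp]:
  "I \<in> pos p \<Longrightarrow> f \<in> dir p I \<rightarrow>\<^sub>E pos q \<Longrightarrow> d' \<in> dir p' (fst \<phi> I) \<Longrightarrow>
    e' \<in> dir q' (fst \<psi> (f (snd \<phi> I d'))) \<Longrightarrow>
    snd (tri_mor p q p' q' \<phi> \<psi>) (I, f) (d', e') = (snd \<phi> I d', snd \<psi> (f (snd \<phi> I d')) e')"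
  by (simp add: tri_mor_def)

lemma tri_mor_pid: "tri_mor p q p q (pid p) (pid q) = pid (tri p q)"
  by (rule pmor_eqI) (auto intro: tri_mor_pmor pid_pmor simp: PiE_iff extensional_def fun_eq_iff)

lemma tri_mor_mcomp:
  assumes \<phi>: "is_pmor p p' \<phi>" and \<phi>': "is_pmor p' p'' \<phi>'"
    and \<psi>: "is_pmor q q' \<psi>" and \<psi>': "is_pmor q' q'' \<psi>'"
  shows "mcomp (tri p q) (tri p'' q'') (tri_mor p' q' p'' q'' \<phi>' \<psi>') (tri_mor p q p' q' \<phi> \<psi>)
       = tri_mor p q p'' q'' (mcomp p p'' \<phi>' \<phi>) (mcomp q q'' \<psi>' \<psi>)"
proof (rule pmor_eqI)
  show "is_pmor (tri p q) (tri p'' q'')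
      (mcomp (tri p q) (tri p'' q'') (tri_mor p' q' p'' q'' \<phi>' \<psi>') (tri_mor p q p' q' \<phi> \<psi>))"
    by (rule mcomp_pmor[OF tri_mor_pmor tri_mor_pmor]) (fact assms)+
  show "is_pmor (tri p q) (tri p'' q'') (tri_mor p q p'' q'' (mcomp p p'' \<phi>' \<phi>) (mcomp q q'' \<psi>' \<psi>))"
    by (rule tri_mor_pmor[OF mcomp_pmor mcomp_pmor]) (fact assms)+
  fix z assume "z \<in> pos (tri p q)"
  then obtain I f where z: "z = (I, f)" "I \<in> pos p" "f \<in> dir p I \<rightarrow>\<^sub>E pos q"
    by auto
  then have f: "d \<in> dir p I \<Longrightarrow> f d \<in> pos q" for d
    by auto
  have "(\<lambda>d'\<in>dir p' (fst \<phi> I). fst \<psi> (f (snd \<phi> I d'))) \<in> dir p' (fst \<phi> I) \<rightarrow>\<^sub>E pos q'"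
    using z by (auto intro!: pmor_pos[OF \<psi>] f pmor_dir[OF \<phi>])
  note facts = z this f pmor_pos[OF \<phi>] pmor_dir[OF \<phi>] pmor_dir[OF \<phi>']
    pmor_pos[OF \<psi>] pmor_dir[OF \<psi>] pmor_dir[OF \<psi>']
  show "fst (mcomp (tri p q) (tri p'' q'') (tri_mor p' q' p'' q'' \<phi>' \<psi>') (tri_mor p q p' q' \<phi> \<psi>)) z
      = fst (tri_mor p q p'' q'' (mcomp p p'' \<phi>' \<phi>) (mcomp q q'' \<psi>' \<psi>)) z"
    using facts by (auto simp: fun_eq_iff)
  fix w
  assume "w \<in> dir (tri p'' q'')
    (fst (mcomp (tri p q) (tri p'' q'') (tri_mor p' q' p'' q'' \<phi>' \<psi>') (tri_mor p q p' q' \<phi> \<psi>)) z)"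
  then show "snd (mcomp (tri p q) (tri p'' q'') (tri_mor p' q' p'' q'' \<phi>' \<psi>') (tri_mor p q p' q' \<phi> \<psi>)) z w
      = snd (tri_mor p q p'' q'' (mcomp p p'' \<phi>' \<phi>) (mcomp q q'' \<psi>' \<psi>)) z w"
    using facts by auto
qed

lemma linmap_fst [simp]: "x \<in> S \<Longrightarrow> fst (linmap S f) x = f x"
  by (simp add: linmap_def)

lemma linmap_pmor: "f \<in> S \<rightarrow> S' \<Longrightarrow> is_pmor (lin S) (lin S') (linmap S f)"
  by (rule is_pmorI) (auto simp: linmap_def)

lemma pmor_lin_eq_linmap:
  assumes "is_pmor (lin S) (lin S') \<gamma>"
  shows "\<gamma> = linmap S (fst \<gamma>)" and "fst \<gamma> \<in> S \<rightarrow>\<^sub>E S'"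
proof -
  show f: "fst \<gamma> \<in> S \<rightarrow>\<^sub>E S'"
    using assms by (auto simp: is_pmor_def)
  show "\<gamma> = linmap S (fst \<gamma>)"
    by (rule pmor_eqI[OF assms linmap_pmor]) (use f in auto)
qed

lemma mcomp_linmap:
  "f \<in> S \<rightarrow>\<^sub>E S' \<Longrightarrow> mcomp (lin S) (lin S'') (linmap S' g) (linmap S f) = linmap S (\<lambda>x. g (f x))"
  by (auto simp: mcomp_def linmap_def fun_eq_iff PiE_iff)

lemma linmap_id: "linmap S (\<lambda>x. x) = pid (lin S)"
  by (auto simp: linmap_def pid_def fun_eq_iff)

lemma comp_iso_pmor: "is_pmor (tri (lin T) (lin S)) (lin (T \<times> S)) (comp_iso T S)"
  by (rule is_pmorI) (auto simp: comp_iso_def)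

lemma comp_iso_fst [simp]: "t \<in> T \<Longrightarrow> g () \<in> S \<Longrightarrow> fst (comp_iso T S) (t, g) = (t, g ())"
  by (simp add: comp_iso_def)

lemma comp_iso_snd [simp]: "t \<in> T \<Longrightarrow> g () \<in> S \<Longrightarrow> snd (comp_iso T S) (t, g) u = ((), ())"
  by (simp add: comp_iso_def)

lemma comp_iso_iso: "is_iso (tri (lin T) (lin S)) (lin (T \<times> S)) (comp_iso T S)"
proof -
  define \<delta> where "\<delta> = (\<lambda>(t, s)\<in>T \<times> S. (t, \<lambda>u::unit. s), \<lambda>(t, s)\<in>T \<times> S. \<lambda>w\<in>{()} \<times> {()}. ())"
  have \<delta>: "is_pmor (lin (T \<times> S)) (tri (lin T) (lin S)) \<delta>"
    by (rule is_pmorI) (auto simp: \<delta>_def split_beta mem_Times_iff)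
  have "mcomp (tri (lin T) (lin S)) (tri (lin T) (lin S)) \<delta> (comp_iso T S) = pid (tri (lin T) (lin S))"
    by (rule pmor_eqI[OF mcomp_pmor[OF comp_iso_pmor \<delta>] pid_pmor]) (auto simp: \<delta>_def)
  moreover have "mcomp (lin (T \<times> S)) (lin (T \<times> S)) (comp_iso T S) \<delta> = pid (lin (T \<times> S))"
    by (rule pmor_eqI[OF mcomp_pmor[OF \<delta> comp_iso_pmor] pid_pmor]) (auto simp: \<delta>_def)
  ultimately show ?thesis
    unfolding is_iso_def using comp_iso_pmor \<delta> by blast
qed

lemma comp_iso_natural:
  assumes "f \<in> T \<rightarrow>\<^sub>E T'" "g \<in> S \<rightarrow>\<^sub>E S'"
  shows "mcomp (tri (lin T) (lin S)) (lin (T' \<times> S')) (comp_iso T' S')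
        (tri_mor (lin T) (lin S) (lin T') (lin S') (linmap T f) (linmap S g))
      = mcomp (tri (lin T) (lin S)) (lin (T' \<times> S'))
        (linmap (T \<times> S) (\<lambda>(t, s). (f t, g s))) (comp_iso T S)"
proof (rule pmor_eqI)
  show "is_pmor (tri (lin T) (lin S)) (lin (T' \<times> S')) (mcomp (tri (lin T) (lin S)) (lin (T' \<times> S'))
      (comp_iso T' S') (tri_mor (lin T) (lin S) (lin T') (lin S') (linmap T f) (linmap S g)))"
    using assms by (intro mcomp_pmor[OF tri_mor_pmor comp_iso_pmor] linmap_pmor) auto
  show "is_pmor (tri (lin T) (lin S)) (lin (T' \<times> S')) (mcomp (tri (lin T) (lin S)) (lin (T' \<times> S'))
      (linmap (T \<times> S) (\<lambda>(t, s). (f t, g s))) (comp_iso T S))"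
    using assms by (intro mcomp_pmor[OF comp_iso_pmor] linmap_pmor) auto
qed (use assms in \<open>auto simp: PiE_iff\<close>)

lemma lunit_pmor: "is_pmor (tri (lin {()}) a) a (lunit a)"
  by (rule is_pmorI) (auto simp: lunit_def)

lemma runit_pmor: "is_pmor (tri a (lin {()})) a (runit a)"
  by (rule is_pmorI) (auto simp: runit_def)

lemma comp_iso_lunit:
  "mcomp (tri (lin {()}) (lin T)) (lin T) (linmap ({()} \<times> T) snd) (comp_iso {()} T) = lunit (lin T)"
  by (rule pmor_eqI[OF mcomp_pmor[OF comp_iso_pmor linmap_pmor] lunit_pmor]) (auto simp: lunit_def)

lemma comp_iso_runit:
  "mcomp (tri (lin T) (lin {()})) (lin T) (linmap (T \<times> {()}) fst) (comp_iso T {()}) = runit (lin T)"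
  by (rule pmor_eqI[OF mcomp_pmor[OF comp_iso_pmor linmap_pmor] runit_pmor]) (auto simp: runit_def)

lemma dir_tri_split: "dir (tri p q) x = Sigma (dir p (fst x)) (\<lambda>d. dir q (snd x d))"
  by (cases x) simp

lemma assoc_fwd_pmor: "is_pmor (tri (tri p q) r) (tri p (tri q r)) (assoc_fwd p q r)"
  by (rule is_pmorI) (auto simp: assoc_fwd_def PiE_iff extensional_def)

lemma assoc_bwd_pmor: "is_pmor (tri p (tri q r)) (tri (tri p q) r) (assoc_bwd p q r)"
  by (rule is_pmorI)
    (auto simp: assoc_bwd_def PiE_iff extensional_def dir_tri_split case_prod_unfold split: if_splits)

lemma assoc_fwd_fst [simp]:
  "((I, f), g) \<in> pos (tri (tri p q) r) \<Longrightarrow>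
    fst (assoc_fwd p q r) ((I, f), g) = (I, \<lambda>d\<in>dir p I. (f d, \<lambda>e\<in>dir q (f d). g (d, e)))"
  by (simp add: assoc_fwd_def)

lemma assoc_fwd_snd [simp]:
  "((I, f), g) \<in> pos (tri (tri p q) r) \<Longrightarrow> d \<in> dir p I \<Longrightarrow> e \<in> dir q (f d) \<Longrightarrow>
    x \<in> dir r (g (d, e)) \<Longrightarrow> snd (assoc_fwd p q r) ((I, f), g) (d, (e, x)) = ((d, e), x)"
  by (simp add: assoc_fwd_def)

lemma assoc_bwd_fst [simp]:
  "(I, h) \<in> pos (tri p (tri q r)) \<Longrightarrow>
    fst (assoc_bwd p q r) (I, h) = ((I, \<lambda>d\<in>dir p I. fst (h d)),
      \<lambda>(d, e)\<in>Sigma (dir p I) (\<lambda>d. dir q (fst (h d))). snd (h d) e)"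
  by (simp add: assoc_bwd_def)

lemma assoc_bwd_snd [simp]:
  "(I, h) \<in> pos (tri p (tri q r)) \<Longrightarrow> d \<in> dir p I \<Longrightarrow> e \<in> dir q (fst (h d)) \<Longrightarrow>
    x \<in> dir r (snd (h d) e) \<Longrightarrow> snd (assoc_bwd p q r) (I, h) ((d, e), x) = (d, (e, x))"
  by (simp add: assoc_bwd_def)

lemma comp_iso_assoc:
  "mcomp (tri (tri (lin U) (lin T)) (lin S)) (lin (U \<times> (T \<times> S)))
      (linmap ((U \<times> T) \<times> S) (\<lambda>((u, t), s). (u, (t, s))))
      (mcomp (tri (tri (lin U) (lin T)) (lin S)) (lin ((U \<times> T) \<times> S))
         (comp_iso (U \<times> T) S)
         (tri_mor (tri (lin U) (lin T)) (lin S) (lin (U \<times> T)) (lin S) (comp_iso U T) (pid (lin S))))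
    = mcomp (tri (tri (lin U) (lin T)) (lin S)) (lin (U \<times> (T \<times> S)))
        (comp_iso U (T \<times> S))
        (mcomp (tri (tri (lin U) (lin T)) (lin S)) (tri (lin U) (lin (T \<times> S)))
           (tri_mor (lin U) (tri (lin T) (lin S)) (lin U) (lin (T \<times> S)) (pid (lin U)) (comp_iso T S))
           (assoc_fwd (lin U) (lin T) (lin S)))"
proof (rule pmor_eqI)
  show "is_pmor (tri (tri (lin U) (lin T)) (lin S)) (lin (U \<times> (T \<times> S)))
      (mcomp (tri (tri (lin U) (lin T)) (lin S)) (lin (U \<times> (T \<times> S)))
        (linmap ((U \<times> T) \<times> S) (\<lambda>((u, t), s). (u, (t, s))))
        (mcomp (tri (tri (lin U) (lin T)) (lin S)) (lin ((U \<times> T) \<times> S)) (comp_iso (U \<times> T) S)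
          (tri_mor (tri (lin U) (lin T)) (lin S) (lin (U \<times> T)) (lin S) (comp_iso U T) (pid (lin S)))))"
    by (intro mcomp_pmor[OF mcomp_pmor[OF tri_mor_pmor[OF comp_iso_pmor pid_pmor] comp_iso_pmor]]
        linmap_pmor) auto
  show "is_pmor (tri (tri (lin U) (lin T)) (lin S)) (lin (U \<times> (T \<times> S)))
      (mcomp (tri (tri (lin U) (lin T)) (lin S)) (lin (U \<times> (T \<times> S))) (comp_iso U (T \<times> S))
        (mcomp (tri (tri (lin U) (lin T)) (lin S)) (tri (lin U) (lin (T \<times> S)))
          (tri_mor (lin U) (tri (lin T) (lin S)) (lin U) (lin (T \<times> S)) (pid (lin U)) (comp_iso T S))
          (assoc_fwd (lin U) (lin T) (lin S))))"
    by (rule mcomp_pmor[OF mcomp_pmor[OF assoc_fwd_pmor tri_mor_pmor[OF pid_pmor comp_iso_pmor]]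
        comp_iso_pmor])
qed auto

section \<open>Coalgebras versus linear handlers\<close>

lemma is_coalgD:
  assumes "is_coalg p q S \<theta>" "x \<in> S"
  shows "is_pmor q p (fst (\<theta> x))"
    and "\<And>J d. J \<in> pos q \<Longrightarrow> d \<in> dir p (fst (fst (\<theta> x)) J) \<Longrightarrow> snd (\<theta> x) (J, d) \<in> S"
    and "\<And>J d. \<not> (J \<in> pos q \<and> d \<in> dir p (fst (fst (\<theta> x)) J)) \<Longrightarrow> snd (\<theta> x) (J, d) = undefined"
proof -
  obtain \<chi> k where \<theta>x: "\<theta> x = (\<chi>, k)"
    by (cases "\<theta> x")
  have "\<theta> x \<in> pos (tri (ihom q p) (cpoly S))"
    using assms unfolding is_coalg_def by blast
  then have "is_pmor q p \<chi>" "k \<in> Sigma (pos q) (\<lambda>J. dir p (fst \<chi> J)) \<rightarrow>\<^sub>E S"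
    using \<theta>x by auto
  then show "is_pmor q p (fst (\<theta> x))"
    and "\<And>J d. J \<in> pos q \<Longrightarrow> d \<in> dir p (fst (fst (\<theta> x)) J) \<Longrightarrow> snd (\<theta> x) (J, d) \<in> S"
    and "\<And>J d. \<not> (J \<in> pos q \<and> d \<in> dir p (fst (fst (\<theta> x)) J)) \<Longrightarrow> snd (\<theta> x) (J, d) = undefined"
    using \<theta>x by (auto simp: PiE_iff extensional_def)
qed

lemma coalg_pos: "is_coalg p q S \<theta> \<Longrightarrow> x \<in> S \<Longrightarrow> J \<in> pos q \<Longrightarrow> fst (fst (\<theta> x)) J \<in> pos p"
  by (rule pmor_pos[OF is_coalgD(1)])

lemma coalg_dir:
  "is_coalg p q S \<theta> \<Longrightarrow> x \<in> S \<Longrightarrow> J \<in> pos q \<Longrightarrow> d \<in> dir p (fst (fst (\<theta> x)) J) \<Longrightarrow>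
    snd (fst (\<theta> x)) J d \<in> dir q J"
  by (rule pmor_dir[OF is_coalgD(1)])

lemma coalg_undefined: "is_coalg p q S \<theta> \<Longrightarrow> x \<notin> S \<Longrightarrow> \<theta> x = undefined"
  by (auto simp: is_coalg_def PiE_iff extensional_def)

lemma Phi_fst:
  "x \<in> S \<Longrightarrow> g () \<in> pos q \<Longrightarrow> fst (Phi p q S \<theta>) (x, g) =
    (fst (fst (\<theta> x)) (g ()), \<lambda>d\<in>dir p (fst (fst (\<theta> x)) (g ())). snd (\<theta> x) (g (), d))"
  by (simp add: Phi_def)

lemma Phi_snd:
  "x \<in> S \<Longrightarrow> g () \<in> pos q \<Longrightarrow> d \<in> dir p (fst (fst (\<theta> x)) (g ())) \<Longrightarrow>
    snd (Phi p q S \<theta>) (x, g) (d, u) = ((), snd (fst (\<theta> x)) (g ()) d)"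
  by (simp add: Phi_def)

lemma is_handler_Phi: "is_coalg p q S \<theta> \<Longrightarrow> is_handler p q (lin S) (Phi p q S \<theta>)"
  unfolding is_handler_def
  by (rule is_pmorI)
    (auto simp: Phi_def PiE_iff extensional_def is_coalgD coalg_pos coalg_dir)

lemma Phi_pmor: "is_coalg p q S \<theta> \<Longrightarrow> is_pmor (tri (lin S) q) (tri p (lin S)) (Phi p q S \<theta>)"
  using is_handler_Phi by (simp add: is_handler_def)

definition coalg_of_handler :: "('i, 'd) poly \<Rightarrow> ('j, 'e) poly \<Rightarrow> 's set
    \<Rightarrow> ('s \<times> (unit \<Rightarrow> 'j), unit \<times> 'e, 'i \<times> ('d \<Rightarrow> 's), 'd \<times> unit) pmor
    \<Rightarrow> ('s \<Rightarrow> (('j \<Rightarrow> 'i) \<times> ('j \<Rightarrow> 'd \<Rightarrow> 'e)) \<times> ('j \<times> 'd \<Rightarrow> 's))" where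
  "coalg_of_handler p q S \<eta> = (\<lambda>x\<in>S.
     ((\<lambda>J\<in>pos q. fst (fst \<eta> (x, \<lambda>u. J)),
       \<lambda>J\<in>pos q. \<lambda>d\<in>dir p (fst (fst \<eta> (x, \<lambda>u. J))). snd (snd \<eta> (x, \<lambda>u. J) (d, ()))),
      \<lambda>(J, d)\<in>Sigma (pos q) (\<lambda>J. dir p (fst (fst \<eta> (x, \<lambda>u. J)))). snd (fst \<eta> (x, \<lambda>u. J)) d))"

lemma linear_handlerD:
  assumes "is_handler p q (lin S) \<eta>" "x \<in> S" "J \<in> pos q"
  shows "fst (fst \<eta> (x, \<lambda>u. J)) \<in> pos p"
    and "snd (fst \<eta> (x, \<lambda>u. J)) \<in> dir p (fst (fst \<eta> (x, \<lambda>u. J))) \<rightarrow>\<^sub>E S"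
    and "\<And>d. d \<in> dir p (fst (fst \<eta> (x, \<lambda>u. J))) \<Longrightarrow> snd (fst \<eta> (x, \<lambda>u. J)) d \<in> S"
    and "\<And>d. d \<in> dir p (fst (fst \<eta> (x, \<lambda>u. J))) \<Longrightarrow> snd (snd \<eta> (x, \<lambda>u. J) (d, ())) \<in> dir q J"
proof -
  have \<eta>: "is_pmor (tri (lin S) q) (tri p (lin S)) \<eta>"
    using assms(1) by (simp add: is_handler_def)
  have z: "(x, \<lambda>u. J) \<in> pos (tri (lin S) q)"
    using assms by auto
  obtain I g where \<eta>z: "fst \<eta> (x, \<lambda>u. J) = (I, g)"
    by (cases "fst \<eta> (x, \<lambda>u. J)")
  have "(I, g) \<in> pos (tri p (lin S))"
    using pmor_pos[OF \<eta> z] \<eta>z by simp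
  then show "fst (fst \<eta> (x, \<lambda>u. J)) \<in> pos p"
    and "snd (fst \<eta> (x, \<lambda>u. J)) \<in> dir p (fst (fst \<eta> (x, \<lambda>u. J))) \<rightarrow>\<^sub>E S"
    and "\<And>d. d \<in> dir p (fst (fst \<eta> (x, \<lambda>u. J))) \<Longrightarrow> snd (fst \<eta> (x, \<lambda>u. J)) d \<in> S"
    using \<eta>z by auto
  fix d assume "d \<in> dir p (fst (fst \<eta> (x, \<lambda>u. J)))"
  then have "(d, ()) \<in> dir (tri p (lin S)) (fst \<eta> (x, \<lambda>u. J))"
    using \<eta>z by simp
  from pmor_dir[OF \<eta> z this] show "snd (snd \<eta> (x, \<lambda>u. J) (d, ())) \<in> dir q J"
    by auto
qed

lemma is_coalg_coalg_of_handler: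
  "is_handler p q (lin S) \<eta> \<Longrightarrow> is_coalg p q S (coalg_of_handler p q S \<eta>)"
  unfolding is_coalg_def
  by (auto simp: coalg_of_handler_def PiE_iff extensional_def linear_handlerD intro!: is_pmorI)

lemma coalg_of_handler_Phi:
  assumes \<theta>: "is_coalg p q S \<theta>"
  shows "coalg_of_handler p q S (Phi p q S \<theta>) = \<theta>"
proof
  fix x
  show "coalg_of_handler p q S (Phi p q S \<theta>) x = \<theta> x"
  proof (cases "x \<in> S")
    case False
    then show ?thesis
      using \<theta> by (simp add: coalg_of_handler_def coalg_undefined)
  next
    case x: True
    note \<chi> = is_coalgD(1)[OF \<theta> x]
    have "(\<lambda>J\<in>pos q. fst (fst (Phi p q S \<theta>) (x, \<lambda>u. J))) = fst (fst (\<theta> x))"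
      by (rule ext) (simp add: Phi_fst x pmor_fst_undefined[OF \<chi>])
    moreover have "(\<lambda>J\<in>pos q. \<lambda>d\<in>dir p (fst (fst (Phi p q S \<theta>) (x, \<lambda>u. J))).
        snd (snd (Phi p q S \<theta>) (x, \<lambda>u. J) (d, ()))) = snd (fst (\<theta> x))"
      by (intro ext)
        (auto simp: Phi_fst Phi_snd x pmor_snd_undefined[OF \<chi>] pmor_snd_undefined_dir[OF \<chi>])
    moreover have "(\<lambda>(J, d)\<in>Sigma (pos q) (\<lambda>J. dir p (fst (fst (Phi p q S \<theta>) (x, \<lambda>u. J)))).
        snd (fst (Phi p q S \<theta>) (x, \<lambda>u. J)) d) = snd (\<theta> x)"
    proof
      fix z
      show "(\<lambda>(J, d)\<in>Sigma (pos q) (\<lambda>J. dir p (fst (fst (Phi p q S \<theta>) (x, \<lambda>u. J)))).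
          snd (fst (Phi p q S \<theta>) (x, \<lambda>u. J)) d) z = snd (\<theta> x) z"
        by (cases z, cases "fst z \<in> pos q") (auto simp: Phi_fst x is_coalgD(3)[OF \<theta> x])
    qed
    ultimately show ?thesis
      using x by (simp add: coalg_of_handler_def)
  qed
qed

lemma Phi_coalg_of_handler:
  assumes "is_handler p q (lin S) \<eta>"
  shows "Phi p q S (coalg_of_handler p q S \<eta>) = \<eta>"
proof (rule pmor_eqI)
  show \<eta>: "is_pmor (tri (lin S) q) (tri p (lin S)) \<eta>"
    using assms by (simp add: is_handler_def)
  show "is_pmor (tri (lin S) q) (tri p (lin S)) (Phi p q S (coalg_of_handler p q S \<eta>))"
    using Phi_pmor[OF is_coalg_coalg_of_handler[OF assms]] .
  fix z assume z: "z \<in> pos (tri (lin S) q)"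
  then obtain x f where "z = (x, f)" "x \<in> S" "f () \<in> pos q"
    by auto
  then obtain J where zJ: "z = (x, \<lambda>u. J)" "x \<in> S" "J \<in> pos q"
    by (metis unit_fun_eq)
  obtain I g where \<eta>z: "fst \<eta> (x, \<lambda>u. J) = (I, g)"
    by (cases "fst \<eta> (x, \<lambda>u. J)")
  have g: "g \<in> dir p I \<rightarrow>\<^sub>E S"
    using linear_handlerD(2)[OF assms zJ(2,3)] \<eta>z by simp
  then show "fst (Phi p q S (coalg_of_handler p q S \<eta>)) z = fst \<eta> z"
    using zJ \<eta>z by (simp add: Phi_def coalg_of_handler_def cong: restrict_cong)
  fix w assume "w \<in> dir (tri p (lin S)) (fst (Phi p q S (coalg_of_handler p q S \<eta>)) z)"
  then obtain d where w: "w = (d, ())" "d \<in> dir p I"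
    using zJ \<eta>z g by (auto simp: Phi_def coalg_of_handler_def)
  then show "snd (Phi p q S (coalg_of_handler p q S \<eta>)) z w = snd \<eta> z w"
    unfolding zJ(1) w(1) using zJ(2,3) w(2) \<eta>z by (simp add: Phi_def coalg_of_handler_def prod_eq_iff)
qed

theorem bij_betw_Phi: "bij_betw (Phi p q S) {\<theta>. is_coalg p q S \<theta>} {\<eta>. is_handler p q (lin S) \<eta>}"
  by (rule bij_betw_byWitness[where f' = "coalg_of_handler p q S"])
    (auto simp: coalg_of_handler_Phi Phi_coalg_of_handler is_handler_Phi is_coalg_coalg_of_handler)

section \<open>Squares\<close>

text \<open>At state \<open>x\<close> and input position \<open>J\<close>, both paths around a square give the same output
  position, the same next states and the same directions returned to \<open>J\<close>.\<close>
definition coalg_square_at :: "('i', 'd') poly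
    \<Rightarrow> ('s \<Rightarrow> (('j \<Rightarrow> 'i) \<times> ('j \<Rightarrow> 'd \<Rightarrow> 'e)) \<times> ('j \<times> 'd \<Rightarrow> 's))
    \<Rightarrow> ('s' \<Rightarrow> (('j' \<Rightarrow> 'i') \<times> ('j' \<Rightarrow> 'd' \<Rightarrow> 'e')) \<times> ('j' \<times> 'd' \<Rightarrow> 's'))
    \<Rightarrow> ('j, 'e, 'j', 'e') pmor \<Rightarrow> ('i, 'd, 'i', 'd') pmor \<Rightarrow> ('s \<Rightarrow> 's') \<Rightarrow> 's \<Rightarrow> 'j \<Rightarrow> bool" where
  "coalg_square_at p' \<theta> \<theta>' \<psi> \<phi> f x J \<longleftrightarrow>
     fst \<phi> (fst (fst (\<theta> x)) J) = fst (fst (\<theta>' (f x))) (fst \<psi> J) \<and>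
     (\<forall>d\<in>dir p' (fst \<phi> (fst (fst (\<theta> x)) J)).
        f (snd (\<theta> x) (J, snd \<phi> (fst (fst (\<theta> x)) J) d)) = snd (\<theta>' (f x)) (fst \<psi> J, d) \<and>
        snd (fst (\<theta> x)) J (snd \<phi> (fst (fst (\<theta> x)) J) d) = snd \<psi> J (snd (fst (\<theta>' (f x))) (fst \<psi> J) d))"

lemma cmor_fst [simp]: "x \<in> S \<Longrightarrow> fst (cmor S f) x = f x"
  by (simp add: cmor_def)

lemma org_sq_post_side:
  assumes \<theta>: "is_coalg p q S \<theta>" and x: "x \<in> S" and \<phi>: "is_pmor p p' \<phi>"
  shows "fst (tri_mor (ihom q p') (cpoly S) (ihom q p') (cpoly S') (pid (ihom q p')) (cmor S f))
          (fst (tri_mor (ihom q p) (cpoly S) (ihom q p') (cpoly S) (ihom_post q p p' \<phi>) (pid (cpoly S)))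
             (\<theta> x))
   = (mcomp q p' \<phi> (fst (\<theta> x)),
      \<lambda>(J, d')\<in>Sigma (pos q) (\<lambda>J. dir p' (fst \<phi> (fst (fst (\<theta> x)) J))).
        f (snd (\<theta> x) (J, snd \<phi> (fst (fst (\<theta> x)) J) d')))"
proof -
  obtain \<chi> k where \<theta>x: "\<theta> x = (\<chi>, k)"
    by (cases "\<theta> x")
  have \<chi>: "is_pmor q p \<chi>"
    using is_coalgD(1)[OF \<theta> x] \<theta>x by simp
  have k: "J \<in> pos q \<Longrightarrow> d \<in> dir p (fst \<chi> J) \<Longrightarrow> k (J, d) \<in> S" for J d
    using is_coalgD(2)[OF \<theta> x] \<theta>x by auto
  have "k \<in> Sigma (pos q) (\<lambda>J. dir p (fst \<chi> J)) \<rightarrow>\<^sub>E S"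
    using is_coalgD[OF \<theta> x] \<theta>x by (auto simp: PiE_iff extensional_def)
  define k' where "k' = (\<lambda>(J, d')\<in>Sigma (pos q) (\<lambda>J. dir p' (fst \<phi> (fst \<chi> J))).
    k (J, snd \<phi> (fst \<chi> J) d'))"
  have dir_post: "dir (ihom q p') (mcomp q p' \<phi> \<chi>) = Sigma (pos q) (\<lambda>J. dir p' (fst \<phi> (fst \<chi> J)))"
    by (simp, rule Sigma_cong) auto
  have "fst (tri_mor (ihom q p) (cpoly S) (ihom q p') (cpoly S) (ihom_post q p p' \<phi>) (pid (cpoly S))) (\<chi>, k)
      = (mcomp q p' \<phi> \<chi>, k')"
    using \<chi> \<open>k \<in> _\<close> by (auto simp: k'_def fun_eq_iff pmor_pos[OF \<chi>] pmor_dir[OF \<phi>] k ihom_post_def)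
  moreover have "mcomp q p' \<phi> \<chi> \<in> pos (ihom q p')"
    using mcomp_pmor[OF \<chi> \<phi>] by simp
  moreover have "k' \<in> dir (ihom q p') (mcomp q p' \<phi> \<chi>) \<rightarrow>\<^sub>E S"
    unfolding dir_post by (auto simp: k'_def pmor_pos[OF \<chi>] pmor_dir[OF \<phi>] k)
  ultimately show ?thesis
    unfolding \<theta>x by (auto simp: k'_def fun_eq_iff pmor_pos[OF \<chi>] pmor_dir[OF \<phi>] k)
qed

lemma org_sq_pre_side:
  assumes \<theta>': "is_coalg p' q' S' \<theta>'" and y: "y \<in> S'" and \<psi>: "is_pmor q q' \<psi>"
  shows "fst (tri_mor (ihom q' p') (cpoly S') (ihom q p') (cpoly S') (ihom_pre q q' p' \<psi>) (pid (cpoly S')))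
          (\<theta>' y)
   = (mcomp q p' (fst (\<theta>' y)) \<psi>,
      \<lambda>(J, d)\<in>Sigma (pos q) (\<lambda>J. dir p' (fst (fst (\<theta>' y)) (fst \<psi> J))). snd (\<theta>' y) (fst \<psi> J, d))"
proof -
  obtain \<chi> k where \<theta>y: "\<theta>' y = (\<chi>, k)"
    by (cases "\<theta>' y")
  have \<chi>: "is_pmor q' p' \<chi>"
    using is_coalgD(1)[OF \<theta>' y] \<theta>y by simp
  have k: "J \<in> pos q' \<Longrightarrow> d \<in> dir p' (fst \<chi> J) \<Longrightarrow> k (J, d) \<in> S'" for J d
    using is_coalgD(2)[OF \<theta>' y] \<theta>y by auto
  have "k \<in> Sigma (pos q') (\<lambda>J. dir p' (fst \<chi> J)) \<rightarrow>\<^sub>E S'"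
    using is_coalgD[OF \<theta>' y] \<theta>y by (auto simp: PiE_iff extensional_def)
  moreover have "dir (ihom q p') (mcomp q p' \<chi> \<psi>) = Sigma (pos q) (\<lambda>J. dir p' (fst \<chi> (fst \<psi> J)))"
    by (simp, rule Sigma_cong) auto
  ultimately show ?thesis
    unfolding \<theta>y using \<chi> by (auto simp: fun_eq_iff pmor_pos[OF \<psi>] k ihom_pre_def)
qed

lemma org_sq_state_iff:
  assumes \<theta>: "is_coalg p q S \<theta>" and \<theta>': "is_coalg p' q' S' \<theta>'"
    and \<psi>: "is_pmor q q' \<psi>" and \<phi>: "is_pmor p p' \<phi>" and x: "x \<in> S" and fx: "f x \<in> S'"
  shows "fst (tri_mor (ihom q p') (cpoly S) (ihom q p') (cpoly S') (pid (ihom q p')) (cmor S f))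
          (fst (tri_mor (ihom q p) (cpoly S) (ihom q p') (cpoly S) (ihom_post q p p' \<phi>) (pid (cpoly S)))
             (\<theta> x))
      = fst (tri_mor (ihom q' p') (cpoly S') (ihom q p') (cpoly S') (ihom_pre q q' p' \<psi>) (pid (cpoly S')))
          (\<theta>' (f x))
    \<longleftrightarrow> (\<forall>J\<in>pos q. coalg_square_at p' \<theta> \<theta>' \<psi> \<phi> f x J)"
proof -
  let ?I = "\<lambda>J. fst (fst (\<theta> x)) J" and ?I' = "\<lambda>J. fst (fst (\<theta>' (f x))) (fst \<psi> J)"
  have maps: "mcomp q p' \<phi> (fst (\<theta> x)) = mcomp q p' (fst (\<theta>' (f x))) \<psi> \<longleftrightarrow>
      (\<forall>J\<in>pos q. fst \<phi> (?I J) = ?I' J \<and>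
        (\<forall>d\<in>dir p' (fst \<phi> (?I J)).
          snd (fst (\<theta> x)) J (snd \<phi> (?I J) d) = snd \<psi> J (snd (fst (\<theta>' (f x))) (fst \<psi> J) d)))"
    by (subst pmor_eq_iff[OF mcomp_pmor[OF is_coalgD(1)[OF \<theta> x] \<phi>]
          mcomp_pmor[OF \<psi> is_coalgD(1)[OF \<theta>' fx]]])
      (rule ball_cong[OF refl], auto)
  have states: "(\<lambda>(J, d)\<in>Sigma (pos q) (\<lambda>J. dir p' (fst \<phi> (?I J))). f (snd (\<theta> x) (J, snd \<phi> (?I J) d)))
      = (\<lambda>(J, d)\<in>Sigma (pos q) (\<lambda>J. dir p' (?I' J)). snd (\<theta>' (f x)) (fst \<psi> J, d))
    \<longleftrightarrow> (\<forall>J\<in>pos q. \<forall>d\<in>dir p' (fst \<phi> (?I J)).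
          f (snd (\<theta> x) (J, snd \<phi> (?I J) d)) = snd (\<theta>' (f x)) (fst \<psi> J, d))"
    if "\<forall>J\<in>pos q. fst \<phi> (?I J) = ?I' J"
  proof -
    have "Sigma (pos q) (\<lambda>J. dir p' (?I' J)) = Sigma (pos q) (\<lambda>J. dir p' (fst \<phi> (?I J)))"
      using that by (intro Sigma_cong) auto
    then show ?thesis
      by (auto simp: fun_eq_iff)
  qed
  show ?thesis
    unfolding org_sq_post_side[OF \<theta> x \<phi>] org_sq_pre_side[OF \<theta>' fx \<psi>] prod.inject maps
      coalg_square_at_def
    using states by blast
qed

lemma org_sq_iff:
  assumes "is_coalg p q S \<theta>" "is_coalg p' q' S' \<theta>'" "is_pmor q q' \<psi>" "is_pmor p p' \<phi>"
    and f: "f \<in> S \<rightarrow>\<^sub>E S'"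
  shows "org_sq p q S \<theta> p' q' S' \<theta>' \<psi> \<phi> f \<longleftrightarrow> (\<forall>x\<in>S. \<forall>J\<in>pos q. coalg_square_at p' \<theta> \<theta>' \<psi> \<phi> f x J)"
proof -
  have "f x \<in> S'" if "x \<in> S" for x
    using f that by auto
  then show ?thesis
    unfolding org_sq_def using f org_sq_state_iff[OF assms(1-4)] by (simp cong: ball_cong)
qed

lemma pair_restrict_eq:
  "(a, restrict F (D a)) = (b, restrict G (D b)) \<longleftrightarrow> a = b \<and> (\<forall>d\<in>D a. F d = G d)"
  by (auto simp: fun_eq_iff)

lemma ball_pos_tri_lin: "(\<forall>z\<in>pos (tri (lin S) q). P z) \<longleftrightarrow> (\<forall>x\<in>S. \<forall>J\<in>pos q. P (x, \<lambda>u. J))"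
  by (auto, metis unit_fun_eq)

lemma Phi_square_post_side:
  fixes S' f
  assumes \<theta>: "is_coalg p q S \<theta>" and x: "x \<in> S" and J: "J \<in> pos q" and \<phi>: "is_pmor p p' \<phi>"
  defines "L \<equiv> mcomp (tri (lin S) q) (tri p' (lin S'))
    (tri_mor p (lin S) p' (lin S') \<phi> (linmap S f)) (Phi p q S \<theta>)"
  shows "fst L (x, \<lambda>u. J) = (fst \<phi> (fst (fst (\<theta> x)) J),
      \<lambda>d\<in>dir p' (fst \<phi> (fst (fst (\<theta> x)) J)). f (snd (\<theta> x) (J, snd \<phi> (fst (fst (\<theta> x)) J) d)))"
    and "d \<in> dir p' (fst \<phi> (fst (fst (\<theta> x)) J)) \<Longrightarrow>
      snd L (x, \<lambda>u. J) (d, u) = ((), snd (fst (\<theta> x)) J (snd \<phi> (fst (fst (\<theta> x)) J) d))"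
proof -
  have "(\<lambda>d\<in>dir p (fst (fst (\<theta> x)) J). snd (\<theta> x) (J, d)) \<in> dir p (fst (fst (\<theta> x)) J) \<rightarrow>\<^sub>E S"
    using is_coalgD(2)[OF \<theta> x] J by auto
  note facts = this x J coalg_pos[OF \<theta> x J] pmor_dir[OF \<phi>] is_coalgD(2)[OF \<theta> x]
  show "fst L (x, \<lambda>u. J) = (fst \<phi> (fst (fst (\<theta> x)) J),
      \<lambda>d\<in>dir p' (fst \<phi> (fst (fst (\<theta> x)) J)). f (snd (\<theta> x) (J, snd \<phi> (fst (fst (\<theta> x)) J) d)))"
    unfolding L_def using facts by (auto simp: Phi_fst fun_eq_iff)
  show "snd L (x, \<lambda>u. J) (d, u) = ((), snd (fst (\<theta> x)) J (snd \<phi> (fst (fst (\<theta> x)) J) d))"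
    if "d \<in> dir p' (fst \<phi> (fst (fst (\<theta> x)) J))"
    unfolding L_def using facts that by (auto simp: Phi_fst Phi_snd)
qed

lemma Phi_square_pre_side:
  fixes S f
  assumes \<theta>': "is_coalg p' q' S' \<theta>'" and x: "x \<in> S" and J: "J \<in> pos q" and \<psi>: "is_pmor q q' \<psi>"
    and fx: "f x \<in> S'"
  defines "R \<equiv> mcomp (tri (lin S) q) (tri p' (lin S'))
    (Phi p' q' S' \<theta>') (tri_mor (lin S) q (lin S') q' (linmap S f) \<psi>)"
  shows "fst R (x, \<lambda>u. J) = (fst (fst (\<theta>' (f x))) (fst \<psi> J),
      \<lambda>d\<in>dir p' (fst (fst (\<theta>' (f x))) (fst \<psi> J)). snd (\<theta>' (f x)) (fst \<psi> J, d))"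
    and "d \<in> dir p' (fst (fst (\<theta>' (f x))) (fst \<psi> J)) \<Longrightarrow>
      snd R (x, \<lambda>u. J) (d, u) = ((), snd \<psi> J (snd (fst (\<theta>' (f x))) (fst \<psi> J) d))"
  unfolding R_def using x J fx pmor_pos[OF \<psi> J]
  by (simp_all add: Phi_fst Phi_snd pmor_dir[OF is_coalgD(1)[OF \<theta>' fx]])

lemma eff_sq_Phi_linmap_iff:
  assumes \<theta>: "is_coalg p q S \<theta>" and \<theta>': "is_coalg p' q' S' \<theta>'"
    and \<psi>: "is_pmor q q' \<psi>" and \<phi>: "is_pmor p p' \<phi>" and f: "f \<in> S \<rightarrow>\<^sub>E S'"
  shows "eff_sq p q (lin S) (Phi p q S \<theta>) p' q' (lin S') (Phi p' q' S' \<theta>') \<psi> \<phi> (linmap S f) \<longleftrightarrow>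
    (\<forall>x\<in>S. \<forall>J\<in>pos q. coalg_square_at p' \<theta> \<theta>' \<psi> \<phi> f x J)"
proof -
  define L where "L = mcomp (tri (lin S) q) (tri p' (lin S'))
    (tri_mor p (lin S) p' (lin S') \<phi> (linmap S f)) (Phi p q S \<theta>)"
  define R where "R = mcomp (tri (lin S) q) (tri p' (lin S'))
    (Phi p' q' S' \<theta>') (tri_mor (lin S) q (lin S') q' (linmap S f) \<psi>)"
  have fS: "f \<in> S \<rightarrow> S'"
    using f by auto
  have "is_pmor (tri (lin S) q) (tri p' (lin S')) L"
    unfolding L_def by (rule mcomp_pmor[OF Phi_pmor[OF \<theta>] tri_mor_pmor[OF \<phi> linmap_pmor[OF fS]]])
  moreover have "is_pmor (tri (lin S) q) (tri p' (lin S')) R"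
    unfolding R_def by (rule mcomp_pmor[OF tri_mor_pmor[OF linmap_pmor[OF fS] \<psi>] Phi_pmor[OF \<theta>']])
  ultimately have "L = R \<longleftrightarrow> (\<forall>x\<in>S. \<forall>J\<in>pos q. fst L (x, \<lambda>u. J) = fst R (x, \<lambda>u. J) \<and>
      (\<forall>w\<in>dir (tri p' (lin S')) (fst L (x, \<lambda>u. J)). snd L (x, \<lambda>u. J) w = snd R (x, \<lambda>u. J) w))"
    by (simp only: pmor_eq_iff ball_pos_tri_lin)
  also have "\<dots> \<longleftrightarrow> (\<forall>x\<in>S. \<forall>J\<in>pos q. coalg_square_at p' \<theta> \<theta>' \<psi> \<phi> f x J)"
  proof (intro ball_cong refl)
    fix x J assume x: "x \<in> S" and J: "J \<in> pos q"
    have fx: "f x \<in> S'"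
      using f x by auto
    note lhs = Phi_square_post_side[where S'=S' and f=f, OF \<theta> x J \<phi>, folded L_def]
      and rhs = Phi_square_pre_side[where f=f, OF \<theta>' x J \<psi> fx, folded R_def]
    show "(fst L (x, \<lambda>u. J) = fst R (x, \<lambda>u. J) \<and>
        (\<forall>w\<in>dir (tri p' (lin S')) (fst L (x, \<lambda>u. J)). snd L (x, \<lambda>u. J) w = snd R (x, \<lambda>u. J) w))
      \<longleftrightarrow> coalg_square_at p' \<theta> \<theta>' \<psi> \<phi> f x J"
      unfolding lhs(1) rhs(1) pair_restrict_eq coalg_square_at_def
      using lhs(2) rhs(2) by (auto simp: prod_eq_iff)
  qed
  finally show ?thesis
    unfolding eff_sq_def L_def R_def using linmap_pmor[OF fS] by simp
qed

lemma org_sq_iff_eff_sq: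
  assumes "is_coalg p q S \<theta>" "is_coalg p' q' S' \<theta>'" "is_pmor q q' \<psi>" "is_pmor p p' \<phi>"
    and "f \<in> S \<rightarrow>\<^sub>E S'"
  shows "org_sq p q S \<theta> p' q' S' \<theta>' \<psi> \<phi> f \<longleftrightarrow>
    eff_sq p q (lin S) (Phi p q S \<theta>) p' q' (lin S') (Phi p' q' S' \<theta>') \<psi> \<phi> (linmap S f)"
  using org_sq_iff[OF assms] eff_sq_Phi_linmap_iff[OF assms] by simp

theorem bij_betw_linmap_squares:
  assumes "is_coalg p q S \<theta>" "is_coalg p' q' S' \<theta>'" "is_pmor q q' \<psi>" "is_pmor p p' \<phi>"
  shows "bij_betw (linmap S) {f. org_sq p q S \<theta> p' q' S' \<theta>' \<psi> \<phi> f}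
    {\<gamma>. eff_sq p q (lin S) (Phi p q S \<theta>) p' q' (lin S') (Phi p' q' S' \<theta>') \<psi> \<phi> \<gamma>}"
proof (rule bij_betw_byWitness[where f' = fst])
  show "\<forall>f\<in>{f. org_sq p q S \<theta> p' q' S' \<theta>' \<psi> \<phi> f}. fst (linmap S f) = f"
    by (auto simp: org_sq_def linmap_def)
  show "\<forall>\<gamma>\<in>{\<gamma>. eff_sq p q (lin S) (Phi p q S \<theta>) p' q' (lin S') (Phi p' q' S' \<theta>') \<psi> \<phi> \<gamma>}.
      linmap S (fst \<gamma>) = \<gamma>"
    using pmor_lin_eq_linmap(1) by (metis (no_types, lifting) eff_sq_def mem_Collect_eq)
  show "linmap S ` {f. org_sq p q S \<theta> p' q' S' \<theta>' \<psi> \<phi> f}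
      \<subseteq> {\<gamma>. eff_sq p q (lin S) (Phi p q S \<theta>) p' q' (lin S') (Phi p' q' S' \<theta>') \<psi> \<phi> \<gamma>}"
    using org_sq_iff_eff_sq[OF assms] by (auto simp: org_sq_def)
  show "fst ` {\<gamma>. eff_sq p q (lin S) (Phi p q S \<theta>) p' q' (lin S') (Phi p' q' S' \<theta>') \<psi> \<phi> \<gamma>}
      \<subseteq> {f. org_sq p q S \<theta> p' q' S' \<theta>' \<psi> \<phi> f}"
    using org_sq_iff_eff_sq[OF assms] pmor_lin_eq_linmap by (fastforce simp: eff_sq_def)
qed

section \<open>Horizontal identities and composition\<close>

lemma Phi_org_id: "Phi p p {()} (org_id p) = eff_id p"
  by (auto simp: Phi_def org_id_def eff_id_def fun_eq_iff pid_pmor)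

lemma org_comp_apply:
  "t \<in> T \<Longrightarrow> s \<in> S \<Longrightarrow> org_comp p q r T \<theta> S \<eta> (t, s) =
    (mcomp r p (fst (\<theta> t)) (fst (\<eta> s)),
     \<lambda>(K, d)\<in>dir (ihom r p) (mcomp r p (fst (\<theta> t)) (fst (\<eta> s))).
       (snd (\<theta> t) (fst (fst (\<eta> s)) K, d), snd (\<eta> s) (K, snd (fst (\<theta> t)) (fst (fst (\<eta> s)) K) d)))"
  by (simp add: org_comp_def)

lemma is_coalg_org_comp:
  assumes \<theta>: "is_coalg p q T \<theta>" and \<eta>: "is_coalg q r S \<eta>"
  shows "is_coalg p r (T \<times> S) (org_comp p q r T \<theta> S \<eta>)"
  unfolding is_coalg_def
proof (rule PiE_I)
  fix z assume "z \<in> T \<times> S"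
  then obtain t s where z: "z = (t, s)" "t \<in> T" "s \<in> S"
    by auto
  have "is_pmor r p (mcomp r p (fst (\<theta> t)) (fst (\<eta> s)))"
    by (rule mcomp_pmor[OF is_coalgD(1)[OF \<eta> z(3)] is_coalgD(1)[OF \<theta> z(2)]])
  moreover have "dir (ihom r p) (mcomp r p (fst (\<theta> t)) (fst (\<eta> s))) =
      Sigma (pos r) (\<lambda>K. dir p (fst (fst (\<theta> t)) (fst (fst (\<eta> s)) K)))"
    by (simp, rule Sigma_cong) auto
  ultimately show "org_comp p q r T \<theta> S \<eta> z \<in> pos (tri (ihom r p) (cpoly (T \<times> S)))"
    unfolding z(1) org_comp_apply[OF z(2,3)]
    by (simp add: restrict_PiE_iff z(2,3) coalg_pos[OF \<eta>] coalg_pos[OF \<theta>] coalg_dir[OF \<theta>]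
        is_coalgD(2)[OF \<theta>] is_coalgD(2)[OF \<eta>] del: restrict_PiE)
next
  fix z assume "z \<notin> T \<times> S"
  then show "org_comp p q r T \<theta> S \<eta> z = undefined"
    by (simp add: org_comp_def)
qed

lemma eff_comp_pmor:
  "is_pmor (tri s q) (tri p s) \<phi> \<Longrightarrow> is_pmor (tri t r) (tri q t) \<psi> \<Longrightarrow>
    is_pmor (tri (tri s t) r) (tri p (tri s t)) (eff_comp p q r s \<phi> t \<psi>)"
  unfolding eff_comp_def Let_def
  by (rule mcomp_pmor[OF mcomp_pmor[OF mcomp_pmor[OF mcomp_pmor[OF
        assoc_fwd_pmor tri_mor_pmor[OF pid_pmor]] assoc_bwd_pmor] tri_mor_pmor[OF _ pid_pmor]]
        assoc_fwd_pmor])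

lemma compositor_eff_sq:
  assumes \<theta>: "is_coalg p q T \<theta>" and \<eta>: "is_coalg q r S \<eta>"
  shows "eff_sq p r (tri (lin T) (lin S)) (eff_comp p q r (lin T) (Phi p q T \<theta>) (lin S) (Phi q r S \<eta>))
    p r (lin (T \<times> S)) (Phi p r (T \<times> S) (org_comp p q r T \<theta> S \<eta>)) (pid r) (pid p) (comp_iso T S)"
  unfolding eff_sq_def
proof (intro conjI comp_iso_pmor pmor_eqI)
  show "is_pmor (tri (tri (lin T) (lin S)) r) (tri p (lin (T \<times> S)))
      (mcomp (tri (tri (lin T) (lin S)) r) (tri p (lin (T \<times> S)))
        (tri_mor p (tri (lin T) (lin S)) p (lin (T \<times> S)) (pid p) (comp_iso T S))
        (eff_comp p q r (lin T) (Phi p q T \<theta>) (lin S) (Phi q r S \<eta>)))"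
    by (rule mcomp_pmor[OF eff_comp_pmor[OF Phi_pmor[OF \<theta>] Phi_pmor[OF \<eta>]]
          tri_mor_pmor[OF pid_pmor comp_iso_pmor]])
  show "is_pmor (tri (tri (lin T) (lin S)) r) (tri p (lin (T \<times> S)))
      (mcomp (tri (tri (lin T) (lin S)) r) (tri p (lin (T \<times> S)))
        (Phi p r (T \<times> S) (org_comp p q r T \<theta> S \<eta>))
        (tri_mor (tri (lin T) (lin S)) r (lin (T \<times> S)) r (comp_iso T S) (pid r)))"
    by (rule mcomp_pmor[OF tri_mor_pmor[OF comp_iso_pmor pid_pmor]
          Phi_pmor[OF is_coalg_org_comp[OF \<theta> \<eta>]]])
qed (clarsimp, simp add: coalg_pos[OF \<theta>] coalg_pos[OF \<eta>] is_coalgD(2)[OF \<theta>]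
    is_coalgD(2)[OF \<eta>] coalg_dir[OF \<theta>] coalg_dir[OF \<eta>] Phi_fst Phi_snd org_comp_apply
    eff_comp_def Let_def restrict_PiE_iff del: restrict_PiE cong: restrict_cong)+

section \<open>The essential image\<close>

lemma eff_sq_conjugate:
  assumes "is_handler p q s \<eta>" and \<gamma>: "is_pmor s s' \<gamma>" and \<delta>: "is_pmor s' s \<delta>"
    and \<delta>\<gamma>: "mcomp s s \<delta> \<gamma> = pid s"
  defines "\<eta>' \<equiv> mcomp (tri s' q) (tri p s') (tri_mor p s p s' (pid p) \<gamma>)
    (mcomp (tri s' q) (tri p s) \<eta> (tri_mor s' q s q \<delta> (pid q)))"
  shows "is_handler p q s' \<eta>'" and "eff_sq p q s \<eta> p q s' \<eta>' (pid q) (pid p) \<gamma>"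
proof -
  have \<eta>: "is_pmor (tri s q) (tri p s) \<eta>"
    using assms(1) by (simp add: is_handler_def)
  define A where "A = tri_mor p s p s' (pid p) \<gamma>"
  define B where "B = tri_mor s' q s q \<delta> (pid q)"
  define C where "C = tri_mor s q s' q \<gamma> (pid q)"
  have A: "is_pmor (tri p s) (tri p s') A"
    unfolding A_def by (rule tri_mor_pmor[OF pid_pmor \<gamma>])
  have B: "is_pmor (tri s' q) (tri s q) B"
    unfolding B_def by (rule tri_mor_pmor[OF \<delta> pid_pmor])
  have C: "is_pmor (tri s q) (tri s' q) C"
    unfolding C_def by (rule tri_mor_pmor[OF \<gamma> pid_pmor])
  show "is_handler p q s' \<eta>'"
    unfolding is_handler_def \<eta>'_def A_def[symmetric] B_def[symmetric]
    by (rule mcomp_pmor[OF mcomp_pmor[OF B \<eta>] A])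
  have BC: "mcomp (tri s q) (tri s q) B C = pid (tri s q)"
    unfolding B_def C_def
    by (simp add: tri_mor_mcomp[OF \<gamma> \<delta> pid_pmor pid_pmor] \<delta>\<gamma> mcomp_pid_left[OF pid_pmor] tri_mor_pid)
  have "mcomp (tri s q) (tri p s') \<eta>' C
      = mcomp (tri s q) (tri p s') (mcomp (tri s q) (tri p s') A \<eta>) (mcomp (tri s q) (tri s q) B C)"
    unfolding \<eta>'_def A_def[symmetric] B_def[symmetric]
    by (simp only: mcomp_assoc[OF B \<eta> A] mcomp_assoc[OF C B mcomp_pmor[OF \<eta> A]])
  also have "\<dots> = mcomp (tri s q) (tri p s') A \<eta>"
    unfolding BC by (rule mcomp_pid_right[OF mcomp_pmor[OF \<eta> A]])
  finally show "eff_sq p q s \<eta> p q s' \<eta>' (pid q) (pid p) \<gamma>"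
    unfolding eff_sq_def A_def C_def using \<gamma> by simp
qed

lemma linear_handler_iso_square:
  assumes "is_handler p q s \<eta>" and "is_iso s (lin S) \<gamma>"
  shows "\<exists>\<theta>. is_coalg p q S \<theta> \<and> eff_sq p q s \<eta> p q (lin S) (Phi p q S \<theta>) (pid q) (pid p) \<gamma>"
proof -
  obtain \<delta> where "is_pmor s (lin S) \<gamma>" "is_pmor (lin S) s \<delta>" "mcomp s s \<delta> \<gamma> = pid s"
    using assms(2) unfolding is_iso_def by blast
  from eff_sq_conjugate[OF assms(1) this] obtain \<eta>' where
    "is_handler p q (lin S) \<eta>'" "eff_sq p q s \<eta> p q (lin S) \<eta>' (pid q) (pid p) \<gamma>"
    by blast
  then show ?thesis
    using is_coalg_coalg_of_handler Phi_coalg_of_handler by metis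
qed

theorem handler_in_image_iff_linear_carrier:
  assumes "is_handler p q s \<eta>"
  shows "(\<exists>(S :: 'a set) \<theta> \<gamma>. is_coalg p q S \<theta> \<and> is_iso s (lin S) \<gamma> \<and>
      eff_sq p q s \<eta> p q (lin S) (Phi p q S \<theta>) (pid q) (pid p) \<gamma>)
    \<longleftrightarrow> (\<exists>(S :: 'a set) \<gamma>. is_iso s (lin S) \<gamma>)"
  using linear_handler_iso_square[OF assms] by blast

theorem mainTheorem9:
  shows
  "\<comment> \<open>(1) on horizontal morphisms: the natural bijection, coalgebra structures on S
       \<longleftrightarrow> handler structures on S y (so the image consists of exactly the linear handlers)\<close>
   (\<forall>(p :: ('i, 'd) poly) (q :: ('j, 'e) poly) (S :: 's set).
      bij_betw (Phi p q S) {\<theta>. is_coalg p q S \<theta>} {\<eta>. is_handler p q (lin S) \<eta>})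
   \<and>
   \<comment> \<open>(2) on squares f \<mapsto> f y: well defined, full and faithful\<close>
   (\<forall>(p :: ('i, 'd) poly) (q :: ('j, 'e) poly) (S :: 's set) \<theta>
      (p' :: ('i2, 'd2) poly) (q' :: ('j2, 'e2) poly) (S' :: 's2 set) \<theta>' \<psi> \<phi>.
      is_coalg p q S \<theta> \<and> is_coalg p' q' S' \<theta>' \<and> is_pmor q q' \<psi> \<and> is_pmor p p' \<phi> \<longrightarrow>
      bij_betw (linmap S) {f. org_sq p q S \<theta> p' q' S' \<theta>' \<psi> \<phi> f}
        {\<gamma>. eff_sq p q (lin S) (Phi p q S \<theta>) p' q' (lin S') (Phi p' q' S' \<theta>') \<psi> \<phi> \<gamma>})
   \<and>
   \<comment> \<open>(3) preservation of vertical composition and identities of squares\<close>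
   (\<forall>(S :: 's set) (S' :: 's2 set) (S'' :: 's3 set) f g.
      f \<in> S \<rightarrow>\<^sub>E S' \<longrightarrow>
      mcomp (lin S) (lin S'') (linmap S' g) (linmap S f) = linmap S (\<lambda>x. g (f x)))
   \<and> (\<forall>(S :: 's set). linmap S (\<lambda>x. x) = pid (lin S))
   \<and>
   \<comment> \<open>(4) horizontal identities are preserved (strictly)\<close>
   (\<forall>(p :: ('i, 'd) poly). Phi p p {()} (org_id p) = eff_id p)
   \<and>
   \<comment> \<open>(5) compositor: an invertible globular square F(\<theta>) \<odot> F(\<eta>) \<Rightarrow> F(\<theta> \<odot> \<eta>)\<close>
   (\<forall>(p :: ('i, 'd) poly) (q :: ('j, 'e) poly) (r :: ('k, 'f) poly) (T :: 't set) \<theta> (S :: 's set) \<eta>.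
      is_coalg p q T \<theta> \<and> is_coalg q r S \<eta> \<longrightarrow>
      is_iso (tri (lin T) (lin S)) (lin (T \<times> S)) (comp_iso T S) \<and>
      eff_sq p r (tri (lin T) (lin S)) (eff_comp p q r (lin T) (Phi p q T \<theta>) (lin S) (Phi q r S \<eta>))
             p r (lin (T \<times> S)) (Phi p r (T \<times> S) (org_comp p q r T \<theta> S \<eta>))
             (pid r) (pid p) (comp_iso T S))
   \<and>
   \<comment> \<open>(6) naturality of the compositor w.r.t. horizontal composition of squares\<close>
   (\<forall>(T :: 't set) (T' :: 't2 set) (S :: 's set) (S' :: 's2 set) f g.
      f \<in> T \<rightarrow>\<^sub>E T' \<and> g \<in> S \<rightarrow>\<^sub>E S' \<longrightarrow>
      mcomp (tri (lin T) (lin S)) (lin (T' \<times> S')) (comp_iso T' S')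
        (tri_mor (lin T) (lin S) (lin T') (lin S') (linmap T f) (linmap S g))
      = mcomp (tri (lin T) (lin S)) (lin (T' \<times> S'))
          (linmap (T \<times> S) (\<lambda>(t, s). (f t, g s))) (comp_iso T S))
   \<and>
   \<comment> \<open>(7) associativity coherence\<close>
   (\<forall>(U :: 'u set) (T :: 't set) (S :: 's set).
      mcomp (tri (tri (lin U) (lin T)) (lin S)) (lin (U \<times> (T \<times> S)))
        (linmap ((U \<times> T) \<times> S) (\<lambda>((u, t), s). (u, (t, s))))
        (mcomp (tri (tri (lin U) (lin T)) (lin S)) (lin ((U \<times> T) \<times> S))
           (comp_iso (U \<times> T) S)
           (tri_mor (tri (lin U) (lin T)) (lin S) (lin (U \<times> T)) (lin S) (comp_iso U T) (pid (lin S))))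
      = mcomp (tri (tri (lin U) (lin T)) (lin S)) (lin (U \<times> (T \<times> S)))
          (comp_iso U (T \<times> S))
          (mcomp (tri (tri (lin U) (lin T)) (lin S)) (tri (lin U) (lin (T \<times> S)))
             (tri_mor (lin U) (tri (lin T) (lin S)) (lin U) (lin (T \<times> S)) (pid (lin U)) (comp_iso T S))
             (assoc_fwd (lin U) (lin T) (lin S))))
   \<and>
   \<comment> \<open>(8) unit coherence\<close>
   (\<forall>(T :: 't set).
      mcomp (tri (lin {()}) (lin T)) (lin T) (linmap ({()} \<times> T) snd) (comp_iso {()} T) = lunit (lin T)
      \<and> mcomp (tri (lin T) (lin {()})) (lin T) (linmap (T \<times> {()}) fst) (comp_iso T {()}) = runit (lin T))
   \<and>
   \<comment> \<open>(9) essential image: exactly the handlers whose carrier is (isomorphic to) linear\<close>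
   (\<forall>(p :: ('i, 'd) poly) (q :: ('j, 'e) poly) (s :: ('k, 'f) poly) \<eta>.
      is_handler p q s \<eta> \<longrightarrow>
      ((\<exists>(S :: 'k set) \<theta> \<gamma>. is_coalg p q S \<theta> \<and> is_iso s (lin S) \<gamma> \<and>
          eff_sq p q s \<eta> p q (lin S) (Phi p q S \<theta>) (pid q) (pid p) \<gamma>)
       \<longleftrightarrow> (\<exists>(S :: 'k set) \<gamma>. is_iso s (lin S) \<gamma>)))"
  apply (intro conjI)
  subgoal using bij_betw_Phi by blast
  subgoal using bij_betw_linmap_squares by blast
  subgoal using mcomp_linmap by blast
  subgoal using linmap_id by blast
  subgoal using Phi_org_id by blast
  subgoal using comp_iso_iso compositor_eff_sq by blast
  subgoal using comp_iso_natural by blast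
  subgoal using comp_iso_assoc by blast
  subgoal using comp_iso_lunit comp_iso_runit by blast
  subgoal using handler_in_image_iff_linear_carrier by blast
  done

end
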